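(* Let $\psi\in C^2(\mathbb R;\mathbb R_+)$ with $\lim_{r\to\infty}\psi(r)=\infty$, $0<\psi'\le1$ and $\psi''\le0$. Fix $y\in\mathbb R^d$ and set $V_y(x):=\psi(\log(1+|x-y|^2))$. Then for all $t\ge0$ and $x\in\mathbb R^d$, $$\mathscr L_tV_y(x)\le 2\left(\frac{|a_t(x)|+\langle x-y,b_t(x)\rangle^++g^\nu_t(x)}{1+|x-y|^2}+2H^\nu_t(x,y)\right),$$ where $H^\nu_t(x,y):=\int_{B_\ell^c}\log\big(1+\frac{|z|}{1+|x-y|}\big)\nu_{t,x}(dz)$.
   Context: Fix $d\ge1$, $\ell\in(0,1/\sqrt2]$, $B_\ell=\{|z|<\ell\}$. $a:\mathbb R_+\times\mathbb R^d\to$ symmetric nonnegative definite matrices and $b:\mathbb R_+\times\mathbb R^d\to\mathbb R^d$ measurable; $\{\nu_{t,x}\}$ Lévy measures with $g^\nu_t(x):=\int_{B_\ell}|z|^2\nu_{t,x}(dz)<\infty$, $\nu_{t,x}(B_\ell^c)<\infty$. $\mathscr L_tf(x):=\mathrm{tr}(a_t(x)\nabla^2f(x))+b_t(x)\cdot\nabla f(x)+\int(f(x+z)-f(x)-\mathbf 1_{|z|\le\ell}z\cdot\nabla f(x))\nu_{t,x}(dz)$; $r^+:=\max(r,0)$. *)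

theory Defs
  imports "HOL-Analysis.Analysis"
begin

definition grad :: "(real^'n \<Rightarrow> real) \<Rightarrow> real^'n \<Rightarrow> real^'n" where
  "grad f x = (\<chi> i. frechet_derivative f (at x) (axis i 1))"

definition hess :: "(real^'n \<Rightarrow> real) \<Rightarrow> real^'n \<Rightarrow> real^'n^'n" where
  "hess f x = (\<chi> i j. frechet_derivative (\<lambda>y. grad f y $ j) (at x) (axis i 1))"

definition levy_measure :: "(real^'n) measure \<Rightarrow> bool" where
  "levy_measure \<mu> \<longleftrightarrow> sets \<mu> = sets borel \<and> emeasure \<mu> {0} = 0 \<and>
     (\<integral>\<^sup>+ z. ennreal (min 1 (norm z ^ 2)) \<partial>\<mu>) < \<infinity>"

definition gen_op ::
  "(real \<Rightarrow> real^'n \<Rightarrow> real^'n^'n) \<Rightarrow> (real \<Rightarrow> real^'n \<Rightarrow> real^'n) \<Rightarrow>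
   (real \<Rightarrow> real^'n \<Rightarrow> (real^'n) measure) \<Rightarrow> real \<Rightarrow> real \<Rightarrow>
   (real^'n \<Rightarrow> real) \<Rightarrow> real^'n \<Rightarrow> real" where
  "gen_op a b \<nu> l t f x =
     trace (a t x ** hess f x) + b t x \<bullet> grad f x
     + (\<integral> z. (f (x + z) - f x - (if norm z \<le> l then z \<bullet> grad f x else 0)) \<partial>(\<nu> t x))"

definition g_nu :: "(real \<Rightarrow> real^'n \<Rightarrow> (real^'n) measure) \<Rightarrow> real \<Rightarrow> real \<Rightarrow> real^'n \<Rightarrow> ennreal" where
  "g_nu \<nu> l t x = (\<integral>\<^sup>+ z \<in> ball 0 l. ennreal (norm z ^ 2) \<partial>(\<nu> t x))"

definition H_nu :: "(real \<Rightarrow> real^'n \<Rightarrow> (real^'n) measure) \<Rightarrow> real \<Rightarrow> real \<Rightarrow> real^'n \<Rightarrow> real^'n \<Rightarrow> ennreal" where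
  "H_nu \<nu> l t x y = (\<integral>\<^sup>+ z \<in> - ball 0 l. ennreal (ln (1 + norm z / (1 + norm (x - y)))) \<partial>(\<nu> t x))"

definition V_fun :: "(real \<Rightarrow> real) \<Rightarrow> real^'n \<Rightarrow> real^'n \<Rightarrow> real" where
  "V_fun \<psi> y x = \<psi> (ln (1 + norm (x - y) ^ 2))"

end

theory Submission
  imports Defs
begin

(* Write V = psi o h with h x = ln q x and q x = 1 + |x - y|^2. The chain rule gives
   grad V = (2 psi'(h) / q) (x - y) and Hess V = (4 (psi'' - psi')(h) / q^2) (x - y)(x - y)^T
   + (2 psi'(h) / q) I, so psi'' <= 0 < psi' <= 1 and positive semidefiniteness of a bound the
   diffusion and drift parts by 2 tr a / q and 2 <x - y, b>^+ / q.  For the jumps, concavity of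
   psi gives psi (h (x + z)) - psi (h x) <= psi'(h x) (h (x + z) - h x), and
   ln w - ln q <= (w - q) / q with w - q = 2 <x - y, z> + |z|^2: after compensation a small jump
   contributes at most |z|^2 / q, and a large one at most ln w - ln q, which is bounded by
   4 ln (1 + |z| / (1 + |x - y|)).  Integrability of the compensated increment needs a matching
   quadratic lower bound for small jumps; it comes from the local boundedness of psi''. *)

lemma mvt_nonneg_reals:
  fixes f f' :: "real \<Rightarrow> real"
  assumes deriv: "\<And>r. 0 \<le> r \<Longrightarrow> (f has_real_derivative f' r) (at r within {0..})"
    and "0 \<le> a" "a \<le> b"
  shows "\<exists>z\<in>{a..b}. f b - f a = f' z * (b - a)"
proof -
  have "(f has_derivative (\<lambda>h. f' z * h)) (at z within {a..b})" if "a \<le> z" "z \<le> b" for z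
    using deriv[of z] that assms(2)
    by (auto simp: has_field_derivative_def intro: has_derivative_subset)
  then show ?thesis
    using mvt_very_simple[of a b f "\<lambda>z h. f' z * h"] \<open>a \<le> b\<close> by blast
qed

lemma deriv_nonpos_imp_antitone_nonneg_reals:
  fixes f f' :: "real \<Rightarrow> real"
  assumes "\<And>r. 0 \<le> r \<Longrightarrow> (f has_real_derivative f' r) (at r within {0..})"
    and "\<And>r. 0 \<le> r \<Longrightarrow> f' r \<le> 0"
    and "0 \<le> a" "a \<le> b"
  shows "f b \<le> f a"
proof -
  obtain z where "z \<in> {a..b}" "f b - f a = f' z * (b - a)"
    using mvt_nonneg_reals[OF assms(1,3,4)] by blast
  moreover have "f' z * (b - a) \<le> 0"
    using assms(2)[of z] \<open>z \<in> {a..b}\<close> assms(3,4) by (simp add: mult_nonpos_nonneg)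
  ultimately show ?thesis by simp
qed

lemma concave_tangent_nonneg_reals:
  fixes f f' f'' :: "real \<Rightarrow> real"
  assumes d1: "\<And>r. 0 \<le> r \<Longrightarrow> (f has_real_derivative f' r) (at r within {0..})"
    and d2: "\<And>r. 0 \<le> r \<Longrightarrow> (f' has_real_derivative f'' r) (at r within {0..})"
    and f''_nonpos: "\<And>r. 0 \<le> r \<Longrightarrow> f'' r \<le> 0"
    and "0 \<le> a" "0 \<le> b"
  shows "f b - f a \<le> f' a * (b - a)"
proof (cases "a \<le> b")
  case True
  then obtain z where z: "z \<in> {a..b}" "f b - f a = f' z * (b - a)"
    using mvt_nonneg_reals[OF d1 \<open>0 \<le> a\<close>] by blast
  have "f' z \<le> f' a"
    using deriv_nonpos_imp_antitone_nonneg_reals[OF d2 f''_nonpos \<open>0 \<le> a\<close>] z by simp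
  then show ?thesis
    using z True by (simp add: mult_right_mono)
next
  case False
  then obtain z where z: "z \<in> {b..a}" "f a - f b = f' z * (a - b)"
    using mvt_nonneg_reals[of f f' b a] d1 \<open>0 \<le> b\<close> by auto
  have "f' a \<le> f' z"
    using deriv_nonpos_imp_antitone_nonneg_reals[OF d2 f''_nonpos, of z a] z \<open>0 \<le> b\<close> by simp
  then have "f' a * (a - b) \<le> f' z * (a - b)"
    using False by (simp add: mult_right_mono)
  then show ?thesis
    using z by (simp add: algebra_simps)
qed

lemma deriv_bounded_imp_lipschitz_nonneg_reals:
  fixes f f' :: "real \<Rightarrow> real"
  assumes deriv: "\<And>r. 0 \<le> r \<Longrightarrow> (f has_real_derivative f' r) (at r within {0..})"
    and bound: "\<And>r. 0 \<le> r \<Longrightarrow> r \<le> K \<Longrightarrow> \<bar>f' r\<bar> \<le> M"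
    and "0 \<le> a" "a \<le> K" "0 \<le> b" "b \<le> K"
  shows "\<bar>f b - f a\<bar> \<le> M * \<bar>b - a\<bar>"
proof -
  have *: "\<bar>f d - f c\<bar> \<le> M * \<bar>d - c\<bar>" if cd: "0 \<le> c" "c \<le> d" "d \<le> K" for c d
  proof -
    obtain z where "z \<in> {c..d}" "f d - f c = f' z * (d - c)"
      using mvt_nonneg_reals[OF deriv cd(1,2)] by blast
    moreover have "\<bar>f' z\<bar> \<le> M"
      using bound \<open>z \<in> {c..d}\<close> cd by simp
    ultimately show ?thesis
      using cd by (simp add: abs_mult mult_right_mono)
  qed
  show ?thesis
    using *[of a b] *[of b a] assms(3-6) by (cases "a \<le> b") (simp_all add: abs_minus_commute)
qed

section \<open>Logarithmic estimates\<close>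

lemma ln_diff_le_diff_div:
  fixes q w :: real
  assumes "0 < q" "0 < w"
  shows "ln w - ln q \<le> (w - q) / q"
  using ln_le_minus_one[of "w / q"] assms by (simp add: ln_div diff_divide_distrib)

lemma ln_diff_ge_diff_div:
  fixes q w :: real
  assumes "0 < q" "0 < w"
  shows "(w - q) / w \<le> ln w - ln q"
  using ln_le_minus_one[of "q / w"] assms by (simp add: ln_div diff_divide_distrib)

lemma divide_le_abs_if_one_le:
  fixes x c :: real
  assumes "1 \<le> c"
  shows "x / c \<le> \<bar>x\<bar>"
proof -
  have "x / c \<le> \<bar>x\<bar> / c"
    using assms by (intro divide_right_mono) auto
  also have "\<dots> \<le> \<bar>x\<bar>"
    using assms by (simp add: divide_le_eq mult_le_cancel_left1)
  finally show ?thesis .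
qed

lemma ln_diff_ge_second_order:
  fixes q w :: real
  assumes "1 \<le> q" "1 \<le> w"
  shows "(w - q) / q - (w - q)^2 \<le> ln w - ln q"
proof -
  have "1 \<le> w * q"
    using assms mult_mono[of 1 w 1 q] by simp
  have "(w - q) / q - (w - q) / w = (w - q)^2 / (w * q)"
    using assms by (simp add: field_simps power2_eq_square)
  also have "\<dots> \<le> (w - q)^2"
    using divide_le_abs_if_one_le[OF \<open>1 \<le> w * q\<close>, of "(w - q)^2"] by simp
  finally show ?thesis
    using ln_diff_ge_diff_div[of q w] assms by simp
qed

lemma abs_ln_diff_le_abs_diff:
  fixes q w :: real
  assumes "1 \<le> q" "1 \<le> w"
  shows "\<bar>ln w - ln q\<bar> \<le> \<bar>w - q\<bar>"
  using ln_diff_le_diff_div[of q w] ln_diff_le_diff_div[of w q] assms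
    divide_le_abs_if_one_le[of q "w - q"] divide_le_abs_if_one_le[of w "q - w"]
  by (auto simp: abs_le_iff abs_minus_commute)

lemma norm_add_square:
  fixes u z :: "'a::real_inner"
  shows "norm (u + z)^2 = norm u^2 + 2 * (u \<bullet> z) + norm z^2"
  by (simp add: power2_norm_eq_inner inner_add_left inner_add_right inner_commute)

lemma abs_norm_add_square_diff_le:
  fixes u z :: "'a::real_inner"
  assumes "norm z \<le> 1"
  shows "\<bar>norm (u + z)^2 - norm u^2\<bar> \<le> (2 * norm u + 1) * norm z"
proof -
  have "\<bar>2 * (u \<bullet> z)\<bar> \<le> 2 * norm u * norm z"
    using Cauchy_Schwarz_ineq2[of u z] by simp
  moreover have "norm z^2 \<le> norm z"
    using assms by (simp add: power2_eq_square mult_left_le)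
  ultimately have "\<bar>2 * (u \<bullet> z) + norm z^2\<bar> \<le> (2 * norm u + 1) * norm z"
    using abs_triangle_ineq[of "2 * (u \<bullet> z)" "norm z^2"] by (simp add: algebra_simps)
  then show ?thesis
    by (simp add: norm_add_square)
qed

lemma one_plus_square_le_mult_pow4:
  fixes r \<rho> :: real
  assumes "0 \<le> r" "0 \<le> \<rho>"
  shows "1 + (r + \<rho>)^2 \<le> (1 + r^2) * (1 + \<rho> / (1 + r))^4"
proof -
  have "0 \<le> (r - 1)^2" by simp
  then have "0 \<le> 2 - r + r^2" and "0 \<le> 3 - 2 * r + 3 * r^2"
    using assms by (simp_all add: power2_eq_square algebra_simps)
  then have "0 \<le> \<rho> * (2 * (1 + r) * (2 - r + r^2)) + \<rho>^2 * (3 - 2 * r + 3 * r^2)"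
    using assms by simp
  moreover have "(1 + r^2) * ((1 + r) + 2 * \<rho>)^2 = (1 + (r + \<rho>)^2) * (1 + r)^2
      + (\<rho> * (2 * (1 + r) * (2 - r + r^2)) + \<rho>^2 * (3 - 2 * r + 3 * r^2))"
    by (simp add: power2_eq_square algebra_simps)
  ultimately have "(1 + (r + \<rho>)^2) * (1 + r)^2 \<le> (1 + r^2) * ((1 + r) + 2 * \<rho>)^2"
    by linarith
  moreover have "1 + 2 * \<rho> / (1 + r) = ((1 + r) + 2 * \<rho>) / (1 + r)"
    using assms by (simp add: field_simps)
  ultimately have "1 + (r + \<rho>)^2 \<le> (1 + r^2) * (1 + 2 * \<rho> / (1 + r))^2"
    using assms by (simp add: power_divide le_divide_eq)
  also have "\<dots> \<le> (1 + r^2) * ((1 + \<rho> / (1 + r))^2)^2"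
  proof -
    have "1 + 2 * \<rho> / (1 + r) \<le> (1 + \<rho> / (1 + r))^2"
      unfolding power2_sum by simp
    then show ?thesis
      using assms by (intro mult_left_mono power_mono) auto
  qed
  finally show ?thesis
    by (simp add: power_mult[symmetric])
qed

lemma ln_one_plus_norm_add_square_diff_le:
  fixes u z :: "'a::real_inner"
  shows "ln (1 + norm (u + z)^2) - ln (1 + norm u^2) \<le> 4 * ln (1 + norm z / (1 + norm u))"
proof -
  have pos: "0 < 1 + norm z / (1 + norm u)"
    by (simp add: add_pos_nonneg)
  then have pos4: "0 < (1 + norm u^2) * (1 + norm z / (1 + norm u))^4"
    by (intro mult_pos_pos zero_less_power) (simp_all add: add_pos_nonneg)
  have "1 + norm (u + z)^2 \<le> 1 + (norm u + norm z)^2"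
    using norm_triangle_ineq[of u z] by (simp add: power_mono)
  also have "\<dots> \<le> (1 + norm u^2) * (1 + norm z / (1 + norm u))^4"
    by (rule one_plus_square_le_mult_pow4) simp_all
  finally have "ln (1 + norm (u + z)^2) \<le> ln ((1 + norm u^2) * (1 + norm z / (1 + norm u))^4)"
    using pos4 by (subst ln_le_cancel_iff) (auto simp: add_pos_nonneg)
  also have "\<dots> = ln (1 + norm u^2) + 4 * ln (1 + norm z / (1 + norm u))"
    using ln_mult[of "1 + norm u^2" "(1 + norm z / (1 + norm u))^4"] zero_less_power[OF pos, of 4]
      ln_realpow[of _ 4] add_pos_nonneg[of 1 "norm u^2"]
    by simp
  finally show ?thesis by simp
qed

lemma ln_one_plus_norm_add_square_linearization_le:
  fixes u z :: "'a::real_inner"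
  shows "ln (1 + norm (u + z)^2) - ln (1 + norm u^2) - 2 * (u \<bullet> z) / (1 + norm u^2)
    \<le> norm z^2 / (1 + norm u^2)"
proof -
  have "ln (1 + norm (u + z)^2) - ln (1 + norm u^2)
      \<le> ((1 + norm (u + z)^2) - (1 + norm u^2)) / (1 + norm u^2)"
    by (rule ln_diff_le_diff_div) (simp_all add: add_pos_nonneg)
  then show ?thesis
    by (simp add: norm_add_square add_divide_distrib)
qed

lemma ln_one_plus_norm_add_square_linearization_ge:
  fixes u z :: "'a::real_inner"
  shows "- ((norm (u + z)^2 - norm u^2)^2)
    \<le> ln (1 + norm (u + z)^2) - ln (1 + norm u^2) - 2 * (u \<bullet> z) / (1 + norm u^2)"
proof -
  define e where "e = norm (u + z)^2 - norm u^2"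
  have "e / (1 + norm u^2) - e^2 \<le> ln (1 + norm (u + z)^2) - ln (1 + norm u^2)"
    using ln_diff_ge_second_order[of "1 + norm u^2" "1 + norm (u + z)^2"] by (simp add: e_def)
  moreover have "e / (1 + norm u^2) = 2 * (u \<bullet> z) / (1 + norm u^2) + norm z^2 / (1 + norm u^2)"
    by (simp add: e_def norm_add_square add_divide_distrib)
  moreover have "0 \<le> norm z^2 / (1 + norm u^2)"
    by simp
  ultimately show ?thesis
    unfolding e_def[symmetric] by linarith
qed

lemma square_div_le_four_ln:
  fixes r \<rho> :: real
  assumes "0 \<le> r" "0 \<le> \<rho>" "\<rho> \<le> 1"
  shows "\<rho>^2 / (1 + r^2) \<le> 4 * ln (1 + \<rho> / (1 + r))"
proof -
  define s where "s = \<rho> / (1 + r)"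
  have s: "0 \<le> s" "s \<le> 1"
    using assms by (auto simp: s_def field_simps)
  have "0 \<le> (1 - r)^2" by simp
  then have "(1 + r)^2 / 2 \<le> 1 + r^2"
    by (simp add: power2_eq_square algebra_simps)
  then have "\<rho>^2 / (1 + r^2) \<le> \<rho>^2 / ((1 + r)^2 / 2)"
    using assms by (intro divide_left_mono) (auto simp: add_pos_nonneg)
  also have "\<dots> = 2 * s^2"
    by (simp add: s_def power_divide)
  also have "\<dots> \<le> 4 * (s / (1 + s))"
  proof -
    have "s * (1 + s) \<le> 2"
      using s mult_mono[of s 1 "1 + s" 2] by simp
    then have "2 * s^2 * (1 + s) \<le> 4 * s"
      using s mult_left_mono[of "s * (1 + s)" 2 "2 * s"] by (simp add: power2_eq_square algebra_simps)
    then show ?thesis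
      using s by (simp add: field_simps)
  qed
  also have "\<dots> \<le> 4 * ln (1 + s)"
    using ln_diff_ge_diff_div[of 1 "1 + s"] s by simp
  finally show ?thesis
    by (simp add: s_def)
qed

section \<open>Gradient and Hessian of V\<close>

lemma has_derivative_one_plus_dist_sq:
  fixes x y :: "'a::real_inner"
  shows "((\<lambda>x. 1 + norm (x - y)^2) has_derivative (\<lambda>v. 2 * ((x - y) \<bullet> v))) (at x)"
proof -
  have "((\<lambda>x. 1 + (x - y) \<bullet> (x - y)) has_derivative
      (\<lambda>v. 0 + ((x - y) \<bullet> (v - 0) + (v - 0) \<bullet> (x - y)))) (at x)"
    by (intro derivative_intros)
  then show ?thesis
    by (simp add: power2_norm_eq_inner inner_commute)
qed

lemma has_derivative_comp_ln_one_plus_dist_sq: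
  fixes g g' :: "real \<Rightarrow> real" and x y :: "'a::real_inner"
  assumes deriv: "\<And>r. 0 \<le> r \<Longrightarrow> (g has_real_derivative g' r) (at r within {0..})"
  defines "q \<equiv> 1 + norm (x - y)^2"
  shows "((\<lambda>x. g (ln (1 + norm (x - y)^2))) has_derivative
           (\<lambda>v. g' (ln q) * (2 * ((x - y) \<bullet> v) / q))) (at x)"
proof -
  have "0 < q"
    by (simp add: q_def add_pos_nonneg)
  then have "((\<lambda>x. ln (1 + norm (x - y)^2)) has_derivative (\<lambda>v. 2 * ((x - y) \<bullet> v) / q)) (at x)"
    using has_derivative_compose[OF has_derivative_one_plus_dist_sq
        DERIV_ln[THEN has_field_derivative_imp_has_derivative]]
    by (simp add: q_def field_simps)
  then show ?thesis
    unfolding q_def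
  proof (rule has_derivative_in_compose2[where t = "{0..}" and g' = "\<lambda>r h. g' r * h", rotated 3])
    show "(g has_derivative (\<lambda>h. g' r * h)) (at r within {0..})" if "r \<in> {0..}" for r
      using deriv[of r] that by (simp add: has_field_derivative_def)
  qed auto
qed

lemma grad_V_fun:
  fixes \<psi> \<psi>' :: "real \<Rightarrow> real" and x y :: "real^'n"
  assumes "\<And>r. 0 \<le> r \<Longrightarrow> (\<psi> has_real_derivative \<psi>' r) (at r within {0..})"
  defines "q \<equiv> 1 + norm (x - y)^2"
  shows "grad (V_fun \<psi> y) x = (2 * \<psi>' (ln q) / q) *\<^sub>R (x - y)"
  using has_derivative_comp_ln_one_plus_dist_sq[OF assms(1), where x = x and y = y]
  unfolding grad_def q_def
  by (simp add: frechet_derivative_at[symmetric] V_fun_def[abs_def] vec_eq_iff inner_axis)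

lemma has_derivative_component_div_one_plus_dist_sq:
  fixes x y :: "real^'n"
  defines "q \<equiv> 1 + norm (x - y)^2"
  shows "((\<lambda>x. 2 * (x - y)$j / (1 + norm (x - y)^2)) has_derivative
    (\<lambda>v. 2 * v$j / q - 2 * (x - y)$j * (2 * ((x - y) \<bullet> v)) / q^2)) (at x)"
proof -
  have "0 < q"
    by (simp add: q_def add_pos_nonneg)
  have numerator: "((\<lambda>x. 2 * (x - y)$j) has_derivative (\<lambda>v. 2 * v$j)) (at x)"
    by (auto intro!: derivative_eq_intros bounded_linear_imp_has_derivative)
  have "((\<lambda>x. 2 * (x - y)$j / (1 + norm (x - y)^2)) has_derivative
      (\<lambda>v. (2 * v$j * q - 2 * (x - y)$j * (2 * ((x - y) \<bullet> v))) / (q * q))) (at x)"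
    using has_derivative_divide'[OF numerator has_derivative_one_plus_dist_sq[where x = x and y = y]]
      \<open>0 < q\<close>
    by (simp add: q_def)
  then show ?thesis
    by (rule has_derivative_eq_rhs) (use \<open>0 < q\<close> in \<open>simp add: fun_eq_iff field_simps power2_eq_square\<close>)
qed

lemma hess_V_fun:
  fixes \<psi> \<psi>' \<psi>'' :: "real \<Rightarrow> real" and x y :: "real^'n"
  assumes d1: "\<And>r. 0 \<le> r \<Longrightarrow> (\<psi> has_real_derivative \<psi>' r) (at r within {0..})"
    and d2: "\<And>r. 0 \<le> r \<Longrightarrow> (\<psi>' has_real_derivative \<psi>'' r) (at r within {0..})"
  defines "q \<equiv> 1 + norm (x - y)^2"
  shows "hess (V_fun \<psi> y) x =
    (\<chi> i j. 4 * (\<psi>'' (ln q) - \<psi>' (ln q)) / q^2 * (x - y)$i * (x - y)$j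
           + (if i = j then 2 * \<psi>' (ln q) / q else 0))"
proof -
  have "0 < q"
    by (simp add: q_def add_pos_nonneg)
  have grad_j: "(\<lambda>x. grad (V_fun \<psi> y) x $ j)
      = (\<lambda>x. \<psi>' (ln (1 + norm (x - y)^2)) * (2 * (x - y)$j / (1 + norm (x - y)^2)))" for j
    by (simp add: grad_V_fun[OF d1] fun_eq_iff)
  have grad_j_deriv: "((\<lambda>x. grad (V_fun \<psi> y) x $ j) has_derivative
      (\<lambda>v. \<psi>' (ln q) * (2 * v$j / q - 2 * (x - y)$j * (2 * ((x - y) \<bullet> v)) / q^2)
         + \<psi>'' (ln q) * (2 * ((x - y) \<bullet> v) / q) * (2 * (x - y)$j / q))) (at x)" for j
    unfolding grad_j q_def
    by (rule has_derivative_mult[OF has_derivative_comp_ln_one_plus_dist_sq[OF d2]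
          has_derivative_component_div_one_plus_dist_sq[unfolded q_def]])
  have entry: "hess (V_fun \<psi> y) x $ i $ j
      = \<psi>' (ln q) * (2 * axis i 1 $ j / q - 2 * (x - y)$j * (2 * ((x - y) \<bullet> axis i 1)) / q^2)
        + \<psi>'' (ln q) * (2 * ((x - y) \<bullet> axis i 1) / q) * (2 * (x - y)$j / q)" for i j
    by (simp only: hess_def vec_lambda_beta frechet_derivative_at[OF grad_j_deriv, symmetric])
  have collect: "\<psi>' (ln q) * (2 * axis i 1 $ j / q - 2 * (x - y)$j * (2 * ((x - y) \<bullet> axis i 1)) / q^2)
        + \<psi>'' (ln q) * (2 * ((x - y) \<bullet> axis i 1) / q) * (2 * (x - y)$j / q)
      = 4 * (\<psi>'' (ln q) - \<psi>' (ln q)) / q^2 * (x - y)$i * (x - y)$j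
        + (if i = j then 2 * \<psi>' (ln q) / q else 0)" for i j
    using \<open>0 < q\<close> unfolding inner_axis by (auto simp: axis_def power2_eq_square field_simps)
  show ?thesis
    unfolding vec_eq_iff vec_lambda_beta entry collect by simp
qed

lemma trace_mult_rank_one_plus_scalar:
  fixes A :: "real^'n^'n"
  shows "trace (A ** (\<chi> i j. \<alpha> * u$i * u$j + (if i = j then \<beta> else 0)))
    = \<alpha> * (u \<bullet> (A *v u)) + \<beta> * trace A"
proof -
  have "A$i$k * (\<alpha> * u$k * u$i + (if k = i then \<beta> else 0))
      = \<alpha> * u$i * (A$i$k * u$k) + (if k = i then \<beta> * A$i$i else 0)" for i k
    by (simp add: algebra_simps)
  then have "(\<Sum>k\<in>UNIV. A$i$k * (\<alpha> * u$k * u$i + (if k = i then \<beta> else 0)))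
      = \<alpha> * u$i * (\<Sum>k\<in>UNIV. A$i$k * u$k) + \<beta> * A$i$i" for i
    by (simp add: sum.distrib sum_distrib_left)
  then show ?thesis
    by (simp add: trace_def matrix_matrix_mult_def inner_vec_def matrix_vector_mult_def
        sum.distrib sum_distrib_left mult_ac)
qed

lemma trace_nonneg_if_psd:
  fixes A :: "real^'n^'n"
  assumes "\<And>v. 0 \<le> v \<bullet> (A *v v)"
  shows "0 \<le> trace A"
proof -
  have "A$i$i = axis i 1 \<bullet> (A *v axis i 1)" for i
    by (simp add: matrix_vector_mult_basis inner_axis' column_def)
  then show ?thesis
    unfolding trace_def using assms by (simp add: sum_nonneg)
qed

lemma nn_set_integral_finite_imp_integrable:
  fixes M :: "'a measure" and f :: "'a \<Rightarrow> real"
  assumes S: "S \<in> sets M" and f: "f \<in> borel_measurable M" and nonneg: "\<And>z. 0 \<le> f z"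
    and finite: "(\<integral>\<^sup>+ z \<in> S. ennreal (f z) \<partial>M) < \<infinity>"
  shows "integrable M (\<lambda>z. indicator S z * f z)"
    and "(\<integral>z. indicator S z * f z \<partial>M) = enn2real (\<integral>\<^sup>+ z \<in> S. ennreal (f z) \<partial>M)"
proof -
  have nn_eq: "(\<integral>\<^sup>+ z. ennreal (indicator S z * f z) \<partial>M) = (\<integral>\<^sup>+ z \<in> S. ennreal (f z) \<partial>M)"
    by (rule nn_integral_cong) (simp add: indicator_def)
  have meas: "(\<lambda>z. indicator S z * f z) \<in> borel_measurable M"
    using S f by measurable
  show "integrable M (\<lambda>z. indicator S z * f z)"
    using meas nonneg finite nn_eq by (intro integrableI_nonneg) (auto simp: less_top)
  show "(\<integral>z. indicator S z * f z \<partial>M) = enn2real (\<integral>\<^sup>+ z \<in> S. ennreal (f z) \<partial>M)"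
    using meas nonneg by (subst integral_eq_nn_integral) (auto simp: nn_eq)
qed

lemma integrable_ball_tail_majorant:
  fixes \<mu> :: "'a::euclidean_space measure" and L :: "'a \<Rightarrow> real" and l \<alpha> \<beta> \<gamma> :: real
  assumes sets: "sets \<mu> = sets borel" and L: "L \<in> borel_measurable borel" "\<And>z. 0 \<le> L z"
    and small: "(\<integral>\<^sup>+ z \<in> ball 0 l. ennreal (norm z^2) \<partial>\<mu>) < \<infinity>"
    and tail: "emeasure \<mu> (- ball 0 l) < \<infinity>"
    and large: "(\<integral>\<^sup>+ z \<in> - ball 0 l. ennreal (L z) \<partial>\<mu>) < \<infinity>"
  defines "f \<equiv> \<lambda>z. \<alpha> * (indicator (ball 0 l) z * norm z^2) + \<beta> * (indicator (- ball 0 l) z * L z)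
    + \<gamma> * indicator (- ball 0 l) z"
  shows "integrable \<mu> f"
    and "(\<integral>z. f z \<partial>\<mu>) = \<alpha> * enn2real (\<integral>\<^sup>+ z \<in> ball 0 l. ennreal (norm z^2) \<partial>\<mu>)
      + \<beta> * enn2real (\<integral>\<^sup>+ z \<in> - ball 0 l. ennreal (L z) \<partial>\<mu>) + \<gamma> * measure \<mu> (- ball 0 l)"
proof -
  have meas_cong: "borel_measurable \<mu> = borel_measurable borel"
    by (rule measurable_cong_sets[OF sets refl])
  have B: "ball 0 l \<in> sets \<mu>" and B_compl: "- ball 0 l \<in> sets \<mu>"
    by (simp_all add: sets borel_comp)
  have "(\<lambda>z::'a. norm z^2) \<in> borel_measurable \<mu>"
    unfolding meas_cong by measurable
  note small_part = nn_set_integral_finite_imp_integrable[OF B this zero_le_power2 small]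
  note large_part = nn_set_integral_finite_imp_integrable[OF B_compl L(1)[folded meas_cong] L(2) large]
  have tail_part: "integrable \<mu> (indicator (- ball 0 l) :: _ \<Rightarrow> real)"
    using B_compl tail by (rule integrable_real_indicator)
  show "integrable \<mu> f"
    unfolding f_def
    by (intro Bochner_Integration.integrable_add integrable_mult_right small_part(1) large_part(1) tail_part)
  show "(\<integral>z. f z \<partial>\<mu>) = \<alpha> * enn2real (\<integral>\<^sup>+ z \<in> ball 0 l. ennreal (norm z^2) \<partial>\<mu>)
      + \<beta> * enn2real (\<integral>\<^sup>+ z \<in> - ball 0 l. ennreal (L z) \<partial>\<mu>) + \<gamma> * measure \<mu> (- ball 0 l)"
    unfolding f_def using small_part large_part tail_part sets_eq_imp_space_eq[OF sets]
    by simp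
qed

section \<open>The Lyapunov profile\<close>

locale lyapunov_profile =
  fixes \<psi> \<psi>' \<psi>'' :: "real \<Rightarrow> real"
  assumes deriv: "\<And>r. 0 \<le> r \<Longrightarrow> (\<psi> has_real_derivative \<psi>' r) (at r within {0..})"
    and deriv2: "\<And>r. 0 \<le> r \<Longrightarrow> (\<psi>' has_real_derivative \<psi>'' r) (at r within {0..})"
    and deriv2_continuous: "continuous_on {0..} \<psi>''"
    and nonneg: "\<And>r. 0 \<le> r \<Longrightarrow> 0 \<le> \<psi> r"
    and deriv_pos: "\<And>r. 0 \<le> r \<Longrightarrow> 0 < \<psi>' r"
    and deriv_le_one: "\<And>r. 0 \<le> r \<Longrightarrow> \<psi>' r \<le> 1"
    and deriv2_nonpos: "\<And>r. 0 \<le> r \<Longrightarrow> \<psi>'' r \<le> 0"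
begin

lemma tangent_upper_bound: "0 \<le> a \<Longrightarrow> 0 \<le> b \<Longrightarrow> \<psi> b - \<psi> a \<le> \<psi>' a * (b - a)"
  by (rule concave_tangent_nonneg_reals[OF deriv deriv2 deriv2_nonpos])

lemma deriv_mult_le_max_0: "0 \<le> a \<Longrightarrow> \<psi>' a * d \<le> max 0 d"
  using deriv_pos[of a] deriv_le_one[of a]
  by (cases "0 \<le> d") (auto simp: mult_left_le_one_le intro: mult_nonneg_nonpos)

lemma min_0_le_deriv_mult: "0 \<le> a \<Longrightarrow> min 0 d \<le> \<psi>' a * d"
  using deriv_mult_le_max_0[of a "- d"] by simp

lemma continuous_on_halfline: "continuous_on {0..} \<psi>"
  using deriv DERIV_continuous unfolding continuous_on_eq_continuous_within by blast

lemma trace_mult_hess_V_fun_le: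
  fixes A :: "real^'n^'n" and x y :: "real^'n"
  assumes psd: "\<And>v. 0 \<le> v \<bullet> (A *v v)"
  shows "trace (A ** hess (V_fun \<psi> y) x) \<le> 2 * trace A / (1 + norm (x - y)^2)"
proof -
  define q where "q = 1 + norm (x - y)^2"
  have "0 < q" "0 \<le> ln q"
    by (simp_all add: q_def add_pos_nonneg)
  have "hess (V_fun \<psi> y) x = (\<chi> i j. 4 * (\<psi>'' (ln q) - \<psi>' (ln q)) / q^2 * (x - y)$i * (x - y)$j
      + (if i = j then 2 * \<psi>' (ln q) / q else 0))"
    unfolding q_def by (rule hess_V_fun[OF deriv deriv2])
  then have "trace (A ** hess (V_fun \<psi> y) x)
      = 4 * (\<psi>'' (ln q) - \<psi>' (ln q)) / q^2 * ((x - y) \<bullet> (A *v (x - y)))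
        + 2 * \<psi>' (ln q) / q * trace A"
    by (simp only: trace_mult_rank_one_plus_scalar)
  also have "\<dots> \<le> 0 + 1 * 2 / q * trace A"
  proof (rule add_mono)
    show "4 * (\<psi>'' (ln q) - \<psi>' (ln q)) / q^2 * ((x - y) \<bullet> (A *v (x - y))) \<le> 0"
      using deriv2_nonpos[of "ln q"] deriv_pos[of "ln q"] \<open>0 \<le> ln q\<close> psd
      by (intro mult_nonpos_nonneg[OF divide_nonpos_nonneg[OF mult_nonneg_nonpos]]) auto
    show "2 * \<psi>' (ln q) / q * trace A \<le> 1 * 2 / q * trace A"
      using deriv_le_one[of "ln q"] \<open>0 \<le> ln q\<close> \<open>0 < q\<close> trace_nonneg_if_psd[OF psd]
      by (intro mult_right_mono divide_right_mono) auto
  qed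
  finally show ?thesis
    by (simp add: q_def)
qed

lemma inner_grad_V_fun_le:
  fixes b x y :: "real^'n"
  shows "b \<bullet> grad (V_fun \<psi> y) x \<le> 2 * max 0 ((x - y) \<bullet> b) / (1 + norm (x - y)^2)"
proof -
  define q where "q = 1 + norm (x - y)^2"
  have "0 < q" "0 \<le> ln q"
    by (simp_all add: q_def add_pos_nonneg)
  have "b \<bullet> grad (V_fun \<psi> y) x = \<psi>' (ln q) * (2 * ((x - y) \<bullet> b) / q)"
    by (simp add: grad_V_fun[OF deriv] q_def inner_commute)
  also have "\<dots> \<le> max 0 (2 * ((x - y) \<bullet> b) / q)"
    using \<open>0 \<le> ln q\<close> by (rule deriv_mult_le_max_0)
  also have "\<dots> = 2 * max 0 ((x - y) \<bullet> b) / q"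
    using \<open>0 < q\<close> by (simp add: max_def zero_le_divide_iff)
  finally show ?thesis
    by (simp add: q_def)
qed

definition compensated_increment :: "real \<Rightarrow> 'a::real_inner \<Rightarrow> 'a \<Rightarrow> real" where
  "compensated_increment l u z = \<psi> (ln (1 + norm (u + z)^2)) - \<psi> (ln (1 + norm u^2))
     - (if norm z \<le> l then \<psi>' (ln (1 + norm u^2)) * (2 * (u \<bullet> z) / (1 + norm u^2)) else 0)"

lemma V_fun_increment_eq:
  fixes x y z :: "real^'n"
  shows "V_fun \<psi> y (x + z) - V_fun \<psi> y x - (if norm z \<le> l then z \<bullet> grad (V_fun \<psi> y) x else 0)
    = compensated_increment l (x - y) z"
proof -
  define q where "q = 1 + norm (x - y)^2"
  have "V_fun \<psi> y (x + z) = \<psi> (ln (1 + norm ((x - y) + z)^2))"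
    by (simp add: V_fun_def algebra_simps)
  moreover have "z \<bullet> grad (V_fun \<psi> y) x = \<psi>' (ln q) * (2 * ((x - y) \<bullet> z) / q)"
    by (simp add: grad_V_fun[OF deriv] q_def inner_commute)
  ultimately show ?thesis
    by (simp add: compensated_increment_def V_fun_def q_def)
qed

lemma compensated_increment_le_small:
  fixes u z :: "'a::real_inner"
  assumes "norm z \<le> l"
  shows "compensated_increment l u z \<le> norm z^2 / (1 + norm u^2)"
proof -
  define q where "q = 1 + norm u^2"
  define w where "w = 1 + norm (u + z)^2"
  have "1 \<le> q" "0 \<le> ln q" "0 \<le> ln w"
    by (simp_all add: q_def w_def)
  have "compensated_increment l u z = \<psi> (ln w) - \<psi> (ln q) - \<psi>' (ln q) * (2 * (u \<bullet> z) / q)"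
    using assms by (simp add: compensated_increment_def q_def w_def)
  also have "\<dots> \<le> \<psi>' (ln q) * (ln w - ln q - 2 * (u \<bullet> z) / q)"
    using tangent_upper_bound[OF \<open>0 \<le> ln q\<close> \<open>0 \<le> ln w\<close>] by (simp add: algebra_simps)
  also have "\<dots> \<le> max 0 (ln w - ln q - 2 * (u \<bullet> z) / q)"
    using \<open>0 \<le> ln q\<close> by (rule deriv_mult_le_max_0)
  also have "\<dots> \<le> norm z^2 / q"
    using ln_one_plus_norm_add_square_linearization_le[of u z] \<open>1 \<le> q\<close> by (simp add: q_def w_def)
  finally show ?thesis
    by (simp add: q_def)
qed

lemma compensated_increment_le_large:
  fixes u z :: "'a::real_inner"
  assumes "l < norm z"
  shows "compensated_increment l u z \<le> 4 * ln (1 + norm z / (1 + norm u))"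
proof -
  define q where "q = 1 + norm u^2"
  define w where "w = 1 + norm (u + z)^2"
  have "0 \<le> ln q" "0 \<le> ln w"
    by (simp_all add: q_def w_def)
  have "compensated_increment l u z = \<psi> (ln w) - \<psi> (ln q)"
    using assms by (simp add: compensated_increment_def q_def w_def)
  also have "\<dots> \<le> \<psi>' (ln q) * (ln w - ln q)"
    using tangent_upper_bound[OF \<open>0 \<le> ln q\<close> \<open>0 \<le> ln w\<close>] .
  also have "\<dots> \<le> max 0 (ln w - ln q)"
    using \<open>0 \<le> ln q\<close> by (rule deriv_mult_le_max_0)
  also have "\<dots> \<le> 4 * ln (1 + norm z / (1 + norm u))"
    using ln_one_plus_norm_add_square_diff_le[of u z] by (simp add: q_def w_def)
  finally show ?thesis .
qed

lemma compensated_increment_le: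
  fixes u z :: "'a::real_inner"
  assumes "l \<le> 1"
  shows "compensated_increment l u z
    \<le> (if norm z < l then norm z^2 / (1 + norm u^2) else 4 * ln (1 + norm z / (1 + norm u)))"
proof (cases "norm z < l")
  case True
  then show ?thesis
    using compensated_increment_le_small[of z l u] by simp
next
  case False
  moreover
  \<comment> \<open>The compensator is still active on the sphere \<open>norm z = l\<close>, which lies outside
    the open ball.\<close>
  have "norm z^2 / (1 + norm u^2) \<le> 4 * ln (1 + norm z / (1 + norm u))" if "norm z = l"
    using square_div_le_four_ln[of "norm u" "norm z"] that assms norm_ge_zero[of z] by simp
  ultimately show ?thesis
    using compensated_increment_le_small[of z l u] compensated_increment_le_large[of l z u]
    by (cases "norm z = l") auto
qed

lemma compensated_increment_ge_const:
  fixes u z :: "'a::real_inner"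
  assumes "l \<le> 1"
  shows "- (\<psi> (ln (1 + norm u^2)) + 1) \<le> compensated_increment l u z"
proof -
  define q where "q = 1 + norm u^2"
  have "1 \<le> q" "0 \<le> ln q"
    by (simp_all add: q_def)
  have compensator_le_1: "\<psi>' (ln q) * (2 * (u \<bullet> z) / q) \<le> 1" if "norm z \<le> 1"
  proof -
    have "\<bar>2 * (u \<bullet> z)\<bar> \<le> 2 * norm u * norm z"
      using Cauchy_Schwarz_ineq2[of u z] by simp
    also have "\<dots> \<le> norm u^2 + norm z^2"
      using sum_squares_bound[of "norm u" "norm z"] by (simp add: power2_eq_square)
    also have "\<dots> \<le> q"
      using that by (simp add: q_def power_le_one)
    finally have "\<bar>2 * (u \<bullet> z) / q\<bar> \<le> 1"
      using \<open>1 \<le> q\<close> by (simp add: divide_le_eq)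
    then have "\<psi>' (ln q) * \<bar>2 * (u \<bullet> z) / q\<bar> \<le> 1 * 1"
      using deriv_pos[OF \<open>0 \<le> ln q\<close>] deriv_le_one[OF \<open>0 \<le> ln q\<close>] by (intro mult_mono) auto
    then show ?thesis
      using deriv_pos[OF \<open>0 \<le> ln q\<close>] abs_ge_self[of "2 * (u \<bullet> z) / q"]
        mult_left_mono[of "2 * (u \<bullet> z) / q" "\<bar>2 * (u \<bullet> z) / q\<bar>" "\<psi>' (ln q)"] by simp
  qed
  show ?thesis
    using nonneg[of "ln (1 + norm (u + z)^2)"] compensator_le_1 assms
    by (auto simp: compensated_increment_def q_def)
qed

lemma compensated_increment_ge_quadratic_bound:
  fixes u z :: "'a::real_inner"
  assumes M: "\<And>s. 0 \<le> s \<Longrightarrow> s \<le> ln (1 + (norm u + 1)^2) \<Longrightarrow> \<bar>\<psi>'' s\<bar> \<le> M"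
    and "norm z \<le> 1" "norm z \<le> l"
  shows "- ((M + 1) * (2 * norm u + 1)^2 * norm z^2) \<le> compensated_increment l u z"
proof -
  define q where "q = 1 + norm u^2"
  define w where "w = 1 + norm (u + z)^2"
  define d where "d = w - q"
  have "1 \<le> q" "1 \<le> w" "0 \<le> M"
    using M[of 0] by (simp_all add: q_def w_def)
  have d_le: "\<bar>d\<bar> \<le> (2 * norm u + 1) * norm z"
    using abs_norm_add_square_diff_le[OF \<open>norm z \<le> 1\<close>, of u] by (simp add: d_def w_def q_def)
  have "w \<le> 1 + (norm u + 1)^2" "q \<le> 1 + (norm u + 1)^2"
    using norm_triangle_ineq[of u z] \<open>norm z \<le> 1\<close> by (simp_all add: w_def q_def power_mono)
  then have "\<bar>\<psi>' (ln w) - \<psi>' (ln q)\<bar> \<le> M * \<bar>ln w - ln q\<bar>"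
    using \<open>1 \<le> q\<close> \<open>1 \<le> w\<close> M by (intro deriv_bounded_imp_lipschitz_nonneg_reals[OF deriv2]) auto
  also have "\<dots> \<le> M * \<bar>d\<bar>"
    using abs_ln_diff_le_abs_diff[OF \<open>1 \<le> q\<close> \<open>1 \<le> w\<close>] \<open>0 \<le> M\<close>
    by (intro mult_left_mono) (simp_all add: d_def)
  finally have "\<bar>(\<psi>' (ln w) - \<psi>' (ln q)) * (ln w - ln q)\<bar> \<le> (M * \<bar>d\<bar>) * \<bar>d\<bar>"
    unfolding abs_mult using abs_ln_diff_le_abs_diff[OF \<open>1 \<le> q\<close> \<open>1 \<le> w\<close>] \<open>0 \<le> M\<close>
    by (intro mult_mono) (simp_all add: d_def)
  also have "\<dots> = M * d^2"
    by (simp add: power2_eq_square mult.assoc)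
  finally have lipschitz_part: "- (M * d^2) \<le> (\<psi>' (ln w) - \<psi>' (ln q)) * (ln w - ln q)"
    by (simp only: abs_le_iff) linarith
  have "- (d^2) \<le> min 0 (ln w - ln q - 2 * (u \<bullet> z) / q)"
    using ln_one_plus_norm_add_square_linearization_ge[of u z] by (simp add: d_def q_def w_def)
  also have "\<dots> \<le> \<psi>' (ln q) * (ln w - ln q - 2 * (u \<bullet> z) / q)"
    using \<open>1 \<le> q\<close> by (intro min_0_le_deriv_mult) simp
  finally have linear_part: "- (d^2) \<le> \<psi>' (ln q) * (ln w - ln q - 2 * (u \<bullet> z) / q)" .
  have "(\<psi>' (ln w) - \<psi>' (ln q)) * (ln w - ln q) + \<psi>' (ln q) * (ln w - ln q - 2 * (u \<bullet> z) / q)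
      \<le> compensated_increment l u z"
    using tangent_upper_bound[of "ln w" "ln q"] \<open>1 \<le> q\<close> \<open>1 \<le> w\<close> \<open>norm z \<le> l\<close>
    by (simp add: compensated_increment_def q_def w_def algebra_simps)
  moreover have "d^2 \<le> (2 * norm u + 1)^2 * norm z^2"
    using power_mono[OF d_le abs_ge_zero, of 2] by (simp add: power_mult_distrib)
  then have "M * d^2 + d^2 \<le> (M + 1) * ((2 * norm u + 1)^2 * norm z^2)"
    using mult_left_mono[OF _ \<open>0 \<le> M\<close>] by (simp add: distrib_right add_mono)
  ultimately show ?thesis
    using lipschitz_part linear_part unfolding mult.assoc by linarith
qed

lemma compensated_increment_ge_quadratic:
  fixes u :: "'a::real_inner"
  obtains C where "0 \<le> C"
    and "\<And>z. norm z \<le> 1 \<Longrightarrow> norm z \<le> l \<Longrightarrow> - (C * norm z^2) \<le> compensated_increment l u z"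
proof -
  have "compact (\<psi>'' ` {0..ln (1 + (norm u + 1)^2)})"
    by (intro compact_continuous_image continuous_on_subset[OF deriv2_continuous]) auto
  then obtain M where "\<forall>v \<in> \<psi>'' ` {0..ln (1 + (norm u + 1)^2)}. norm v \<le> M"
    by (meson bounded_pos compact_imp_bounded)
  then have M: "\<And>s. 0 \<le> s \<Longrightarrow> s \<le> ln (1 + (norm u + 1)^2) \<Longrightarrow> \<bar>\<psi>'' s\<bar> \<le> M"
    by simp
  show ?thesis
  proof (rule that)
    show "0 \<le> (M + 1) * (2 * norm u + 1)^2"
      using M[of 0] by simp
  qed (rule compensated_increment_ge_quadratic_bound[OF M])
qed

lemma borel_measurable_compensated_increment:
  fixes u :: "'a::euclidean_space"
  shows "compensated_increment l u \<in> borel_measurable borel"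
proof -
  have "continuous_on UNIV (\<lambda>z. \<psi> (ln (1 + norm (u + z)^2)))"
    by (rule continuous_on_compose2[OF continuous_on_halfline])
      (intro continuous_intros, auto simp: add_nonneg_eq_0_iff)
  then have "(\<lambda>z. \<psi> (ln (1 + norm (u + z)^2))) \<in> borel_measurable borel"
    by (rule borel_measurable_continuous_onI)
  then show ?thesis
    unfolding compensated_increment_def by measurable
qed

lemma compensated_increment_abs_le:
  fixes u :: "'a::real_inner"
  assumes l: "l \<le> 1"
  obtains C where "\<And>z. \<bar>compensated_increment l u z\<bar> \<le> (if norm z < l then C * norm z^2
    else 4 * ln (1 + norm z / (1 + norm u)) + (\<psi> (ln (1 + norm u^2)) + 1))"
proof -
  obtain C where "0 \<le> C"
    and C: "\<And>z. norm z \<le> 1 \<Longrightarrow> norm z \<le> l \<Longrightarrow> - (C * norm z^2) \<le> compensated_increment l u z"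
    using compensated_increment_ge_quadratic by blast
  have "\<bar>compensated_increment l u z\<bar> \<le> (if norm z < l then (C + 1) * norm z^2
    else 4 * ln (1 + norm z / (1 + norm u)) + (\<psi> (ln (1 + norm u^2)) + 1))" for z
  proof (cases "norm z < l")
    case True
    have "compensated_increment l u z \<le> norm z^2 / (1 + norm u^2)"
      using compensated_increment_le[OF l, of u z] True by simp
    moreover have "norm z^2 / (1 + norm u^2) \<le> norm z^2"
      using divide_le_abs_if_one_le[of "1 + norm u^2" "norm z^2"] by simp
    moreover have "- (C * norm z^2) \<le> compensated_increment l u z" "0 \<le> C * norm z^2" "0 \<le> norm z^2"
      using C[of z] True l \<open>0 \<le> C\<close> by simp_all
    ultimately have "\<bar>compensated_increment l u z\<bar> \<le> (C + 1) * norm z^2"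
      unfolding abs_le_iff distrib_right by (intro conjI) linarith+
    then show ?thesis
      using True by simp
  next
    case False
    have "compensated_increment l u z \<le> 4 * ln (1 + norm z / (1 + norm u))"
      using compensated_increment_le[OF l, of u z] False by simp
    moreover have "0 \<le> ln (1 + norm z / (1 + norm u))" "0 \<le> \<psi> (ln (1 + norm u^2))"
      by (simp_all add: nonneg)
    ultimately show ?thesis
      using compensated_increment_ge_const[OF l, of u z] False unfolding abs_le_iff
      by (simp only: if_False) (intro conjI; linarith)
  qed
  then show ?thesis
    by (rule that)
qed

lemma compensated_increment_integrable_and_le:
  fixes \<mu> :: "'a::euclidean_space measure" and u :: 'a and l :: real
  defines "G \<equiv> \<integral>\<^sup>+ z \<in> ball 0 l. ennreal (norm z^2) \<partial>\<mu>"
    and "H \<equiv> \<integral>\<^sup>+ z \<in> - ball 0 l. ennreal (ln (1 + norm z / (1 + norm u))) \<partial>\<mu>"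
  assumes sets: "sets \<mu> = sets borel" and l: "l \<le> 1"
    and G_finite: "G < \<infinity>" and tail_finite: "emeasure \<mu> (- ball 0 l) < \<infinity>" and H_finite: "H < \<infinity>"
  shows "integrable \<mu> (compensated_increment l u)"
    and "(\<integral>z. compensated_increment l u z \<partial>\<mu>) \<le> enn2real G / (1 + norm u^2) + 4 * enn2real H"
proof -
  let ?F = "compensated_increment l u" and ?B = "ball (0::'a) l"
  define L where "L z = ln (1 + norm z / (1 + norm u))" for z :: 'a
  define q where "q = 1 + norm u^2"
  have L_meas: "L \<in> borel_measurable borel"
    unfolding L_def[abs_def] by measurable
  have L_nonneg: "0 \<le> L z" for z
    by (simp add: L_def)
  note majorant = integrable_ball_tail_majorant[OF sets L_meas L_nonneg G_finite[unfolded G_def] tail_finite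
      H_finite[unfolded H_def L_def[symmetric]]]
  obtain C where C: "\<And>z. \<bar>?F z\<bar> \<le> (if norm z < l then C * norm z^2 else 4 * L z + (\<psi> (ln q) + 1))"
    using compensated_increment_abs_le[OF l] unfolding L_def q_def by blast
  have dominated: "\<bar>?F z\<bar> \<le> C * (indicator ?B z * norm z^2) + 4 * (indicator (- ?B) z * L z)
      + (\<psi> (ln q) + 1) * indicator (- ?B) z" for z
    using C[of z] by (cases "norm z < l") simp_all
  have "AE z in \<mu>. norm (?F z) \<le> norm (C * (indicator ?B z * norm z^2)
      + 4 * (indicator (- ?B) z * L z) + (\<psi> (ln q) + 1) * indicator (- ?B) z)"
    using order_trans[OF dominated abs_ge_self] by (intro AE_I2) simp
  moreover have "?F \<in> borel_measurable \<mu>"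
    using borel_measurable_compensated_increment measurable_cong_sets[OF sets refl] by blast
  ultimately show F_int: "integrable \<mu> ?F"
    by (intro Bochner_Integration.integrable_bound[OF majorant(1)])
  have "?F z \<le> 1 / q * (indicator ?B z * norm z^2) + 4 * (indicator (- ?B) z * L z)
      + 0 * indicator (- ?B) z" for z
    using compensated_increment_le[OF l, of u z] by (cases "norm z < l") (simp_all add: L_def q_def)
  then have "(\<integral>z. ?F z \<partial>\<mu>) \<le> 1 / q * enn2real G + 4 * enn2real H + 0 * measure \<mu> (- ?B)"
    using integral_mono[OF F_int majorant(1)[where \<alpha> = "1 / q" and \<beta> = 4 and \<gamma> = 0]]
      majorant(2)[where \<alpha> = "1 / q" and \<beta> = 4 and \<gamma> = 0]
    by (simp add: G_def H_def L_def)
  then show "(\<integral>z. ?F z \<partial>\<mu>) \<le> enn2real G / (1 + norm u^2) + 4 * enn2real H"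
    by (simp add: q_def)
qed

end

theorem lemma2p3:
  fixes a :: "real \<Rightarrow> real^'n \<Rightarrow> real^'n^'n"
    and b :: "real \<Rightarrow> real^'n \<Rightarrow> real^'n"
    and \<nu> :: "real \<Rightarrow> real^'n \<Rightarrow> (real^'n) measure"
    and l :: real
    and \<psi> \<psi>' \<psi>'' :: "real \<Rightarrow> real"
    and y x :: "real^'n" and t :: real
  assumes l_pos: "0 < l" and l_le: "l \<le> 1 / sqrt 2"
    and a_sym: "\<And>s z. transpose (a s z) = a s z"
    and a_nonneg: "\<And>s z v. 0 \<le> v \<bullet> (a s z *v v)"
    and a_meas: "(\<lambda>(s, z). a s z) \<in> borel_measurable borel"
    and b_meas: "(\<lambda>(s, z). b s z) \<in> borel_measurable borel"
    and levy: "\<And>s z. levy_measure (\<nu> s z)"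
    and g_fin: "\<And>s z. g_nu \<nu> l s z < \<infinity>"
    and nu_fin: "\<And>s z. emeasure (\<nu> s z) (- ball 0 l) < \<infinity>"
    and psi_d1: "\<And>r. 0 \<le> r \<Longrightarrow> (\<psi> has_real_derivative \<psi>' r) (at r within {0..})"
    and psi_d2: "\<And>r. 0 \<le> r \<Longrightarrow> (\<psi>' has_real_derivative \<psi>'' r) (at r within {0..})"
    and psi_C2: "continuous_on {0..} \<psi>''"
    and psi_nonneg: "\<And>r. 0 \<le> r \<Longrightarrow> 0 \<le> \<psi> r"
    and psi_lim: "filterlim \<psi> at_top at_top"
    and psi'_pos: "\<And>r. 0 \<le> r \<Longrightarrow> 0 < \<psi>' r"
    and psi'_le1: "\<And>r. 0 \<le> r \<Longrightarrow> \<psi>' r \<le> 1"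
    and psi''_nonpos: "\<And>r. 0 \<le> r \<Longrightarrow> \<psi>'' r \<le> 0"
    and t_nonneg: "0 \<le> t"
    and H_fin: "H_nu \<nu> l t x y < \<infinity>"
  shows "integrable (\<nu> t x)
           (\<lambda>z. V_fun \<psi> y (x + z) - V_fun \<psi> y x
                 - (if norm z \<le> l then z \<bullet> grad (V_fun \<psi> y) x else 0))
         \<and> gen_op a b \<nu> l t (V_fun \<psi> y) x
           \<le> 2 * ((trace (a t x) + max 0 ((x - y) \<bullet> b t x) + enn2real (g_nu \<nu> l t x))
                    / (1 + norm (x - y) ^ 2)
                  + 2 * enn2real (H_nu \<nu> l t x y))"
proof -
  interpret lyapunov_profile \<psi> \<psi>' \<psi>''
    using psi_d1 psi_d2 psi_C2 psi_nonneg psi'_pos psi'_le1 psi''_nonpos by unfold_locales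
  \<comment> \<open>The estimate is pointwise in \<open>(t, x)\<close>.\<close>
  let ?q = "1 + norm (x - y)^2"
  have "l \<le> 1"
    using l_le order_trans[of l "1 / sqrt 2" 1] by simp
  have "sets (\<nu> t x) = sets borel"
    using levy by (simp add: levy_measure_def)
  note jump = compensated_increment_integrable_and_le[OF this \<open>l \<le> 1\<close>
      g_fin[unfolded g_nu_def] nu_fin H_fin[unfolded H_nu_def]]
  have integrand: "(\<lambda>z. V_fun \<psi> y (x + z) - V_fun \<psi> y x
      - (if norm z \<le> l then z \<bullet> grad (V_fun \<psi> y) x else 0)) = compensated_increment l (x - y)"
    by (rule ext) (rule V_fun_increment_eq)
  have "gen_op a b \<nu> l t (V_fun \<psi> y) x = trace (a t x ** hess (V_fun \<psi> y) x)
      + b t x \<bullet> grad (V_fun \<psi> y) x + (\<integral>z. compensated_increment l (x - y) z \<partial>\<nu> t x)"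
    unfolding gen_op_def integrand ..
  also have "\<dots> \<le> 2 * trace (a t x) / ?q + 2 * max 0 ((x - y) \<bullet> b t x) / ?q
      + (enn2real (g_nu \<nu> l t x) / ?q + 4 * enn2real (H_nu \<nu> l t x y))"
    using trace_mult_hess_V_fun_le[OF a_nonneg] inner_grad_V_fun_le jump(2)
    by (intro add_mono) (simp_all add: g_nu_def H_nu_def)
  also have "\<dots> \<le> 2 * ((trace (a t x) + max 0 ((x - y) \<bullet> b t x) + enn2real (g_nu \<nu> l t x)) / ?q
      + 2 * enn2real (H_nu \<nu> l t x y))"
    using divide_right_mono[of "enn2real (g_nu \<nu> l t x)" "2 * enn2real (g_nu \<nu> l t x)" ?q]
    by (simp add: add_divide_distrib)
  finally show ?thesis
    using jump(1) unfolding integrand by (intro conjI)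
qed

end
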